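(* Let $(F_n)_{n\ge0}$ be the Fibonacci numbers, $F_0=0$, $F_1=F_2=1$, $F_{n+2}=F_{n+1}+F_n$. Then for every $n\ge2$, $$F_{n-1}F_{\binom{n+1}{2}}=\left(F_{n-1}F_{n+1}+F_nF_{n-2}\right)F_{\binom{n}{2}}+\left(F_nF_{n-1}^2-F_{n-2}F_n^2\right)F_{\binom{n-1}{2}}.$$ *)

theory Defs
  imports "HOL-Number_Theory.Fib"
begin

end

theory Submission
  imports Defs
begin

text \<open>
  With \<open>a = C(n-1, 2)\<close> the three binomial indices are \<open>a\<close>, \<open>a + (n - 1)\<close> and
  \<open>a + (2n - 1)\<close>. The addition law writes \<open>F(a + j)\<close> as a linear form in \<open>F(a)\<close> and
  \<open>F(a + 1)\<close> whose coefficients are Fibonacci numbers of \<open>j\<close>; after the doubling formulas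
  for \<open>F(2n - 1)\<close> and \<open>F(2n - 2)\<close> the claim becomes a polynomial identity in
  \<open>F(n - 2)\<close> and \<open>F(n - 1)\<close>. In particular it holds for every offset \<open>a\<close>.
\<close>

lemma Suc_choose_two: "Suc n choose 2 = n + (n choose 2)"
  by (simp add: numeral_2_eq_2)

lemma fib_offset_identity:
  fixes a m :: nat
  shows "int (fib (Suc m)) * int (fib (a + 2 * m + 3)) =
     (int (fib (Suc m)) * int (fib (m + 3)) + int (fib (m + 2)) * int (fib m)) * int (fib (a + m + 1))
   + (int (fib (m + 2)) * int (fib (Suc m))^2 - int (fib m) * int (fib (m + 2))^2) * int (fib a)"
proof -
  define x y z A B where "x = int (fib m)" and "y = int (fib (Suc m))"
    and "z = int (fib (m + 2))" and "A = int (fib a)" and "B = int (fib (Suc a))"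
  have fib_z: "z = x + y" and fib_w: "int (fib (m + 3)) = z + y"
    by (simp_all add: x_def y_def z_def numeral_3_eq_3 numeral_2_eq_2)
  have fib_middle: "int (fib (a + m + 1)) = y * B + x * A"
    using fib_add[of a m] by (simp add: x_def y_def A_def B_def)
  have "a + 2 * m + 3 = Suc (a + 2 * Suc m)"
    by simp
  then have "fib (a + 2 * m + 3) = fib (Suc (2 * Suc m)) * fib (Suc a) + fib (2 * Suc m) * fib a"
    by (simp only: fib_add)
  also have "\<dots> = (fib (Suc m)^2 + fib (m + 2)^2) * fib (Suc a) + (fib m + fib (m + 2)) * fib (Suc m) * fib a"
    unfolding fib_rec_odd fib_rec_even by simp
  finally have fib_top: "int (fib (a + 2 * m + 3)) = (y^2 + z^2) * B + (x + z) * y * A"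
    unfolding x_def y_def z_def A_def B_def by simp
  show ?thesis
    unfolding fib_top fib_middle fib_w
    unfolding x_def[symmetric] y_def[symmetric] z_def[symmetric] A_def[symmetric]
    by (simp add: fib_z algebra_simps power2_eq_square)
qed

theorem mainTheorem9:
  fixes n :: nat
  assumes "n \<ge> 2"
  shows "int (fib (n - 1)) * int (fib ((n + 1) choose 2)) =
     (int (fib (n - 1)) * int (fib (n + 1)) + int (fib n) * int (fib (n - 2))) * int (fib (n choose 2))
   + (int (fib n) * int (fib (n - 1))^2 - int (fib (n - 2)) * int (fib n)^2) * int (fib ((n - 1) choose 2))"
proof -
  obtain m where n: "n = m + 2"
    using assms by (metis add.commute le_Suc_ex)
  define a where "a = Suc m choose 2"
  have shifts: "n - 1 = Suc m" "n - 2 = m" "n + 1 = m + 3" "n choose 2 = a + m + 1"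
    by (simp_all add: n a_def numeral_2_eq_2 Suc_choose_two)
  have "(m + 3) choose 2 = a + 2 * m + 3"
    by (simp add: a_def numeral_3_eq_3 numeral_2_eq_2 Suc_choose_two)
  then show ?thesis
    using fib_offset_identity[of m a] unfolding shifts a_def[symmetric] by (simp only: n)
qed

end
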